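(* Let $(x,y,C)\in Q(r)$ with $r\ge5$, let $d(j_1,j_2):=1-y_{j_1,j_2}$, fix $j^*\in J$ and $0<\beta<1$, and put $U:=\{j\in J: d(j,j^* )\le\beta\}$. Then $|U|\le\frac{c}{1-\beta}$.
   Context: Fix a finite set $J$ of jobs, a partial order $\prec$ on $J$, and $c,S,m\in\mathbb N$. Sherali–Adams lift: for a polytope $K=\{x\in\mathbb R^{V}:Ax\ge b\}$ on a finite index set $V$ and $r\ge0$, $SA_r(K)$ is the set of vectors $y$ indexed by subsets of $V$ of size at most $r+1$ with $y_\emptyset=1$ and, for every row $\ell$ and all $I,J'\subseteq V$ with $|I|+|J'|\le r$, $\sum_{H\subseteq J'}(-1)^{|H|}\big(\sum_{v\in V}A_{\ell,v}y_{I\cup H\cup\{v\}}-b_\ell y_{I\cup H}\big)\ge0$. Scheduling LP: let $V=J\times[m]\times\{0,\dots,S-1\}$ and let $K\subseteq\mathbb R^V$ be the set of $x$ with $\sum_{i\in[m]}\sum_{s}x_{j,i,s}=1$ for all $j\in J$, $\sum_{j\in J}x_{j,i,s}\le c$ for all $i,s$, and $0\le x_{j,i,s}\le1$. For $x\in SA_r(K)$ write $x_{j,i,s}=x_{\{(j,i,s)\}}$ and $x_{(j_1,i_1,s_1),(j_2,i_2,s_2)}=x_{\{(j_1,i_1,s_1),(j_2,i_2,s_2)\}}$. $Q(r)$ is the set of triples $(x,y,C)$ with $x\in SA_r(K)$, $y\in\mathbb R^{J\times J}$, $C\in\mathbb R^J$ satisfying $y_{j_1,j_2}=\sum_{s=0}^{S-1}\sum_{i\in[m]}x_{(j_1,i,s),(j_2,i,s)}$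 for all $j_1,j_2\in J$, $C_{j_2}\ge C_{j_1}+(1-y_{j_1,j_2})$ for all $j_1\prec j_2$, and $C_j\ge0$ for all $j$. *)

theory Defs
  imports Complex_Main
begin

text \<open>A lifted vector is a function on subsets of V; only its
  values on subsets of size at most r+1 are constrained.\<close>
definition sa_lift :: "'v set \<Rightarrow> 'l set \<Rightarrow> ('l \<Rightarrow> 'v \<Rightarrow> real) \<Rightarrow> ('l \<Rightarrow> real)
    \<Rightarrow> nat \<Rightarrow> ('v set \<Rightarrow> real) set" where
  "sa_lift V L A b r = {y. y {} = 1 \<and>
     (\<forall>l\<in>L. \<forall>I J'. I \<subseteq> V \<longrightarrow> J' \<subseteq> V \<longrightarrow> card I + card J' \<le> r \<longrightarrow>
        (\<Sum>H\<in>Pow J'. (-1) ^ card H *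
            ((\<Sum>v\<in>V. A l v * y (I \<union> H \<union> {v})) - b l * y (I \<union> H))) \<ge> 0)}"

text \<open>Index set V = J \<times> [m] \<times> {0..S-1}; machines [m] are rendered as {0..<m}.\<close>
definition sched_vars :: "'j set \<Rightarrow> nat \<Rightarrow> nat \<Rightarrow> ('j \<times> nat \<times> nat) set" where
  "sched_vars J m S = J \<times> {..<m} \<times> {..<S}"

text \<open>Rows of the system A x \<ge> b describing the scheduling LP K
  (each equality is written as two inequalities).\<close>
datatype 'j sched_row =
    AsgLo 'j
  | AsgHi 'j
  | Cap nat nat
  | Lo "'j \<times> nat \<times> nat"
  | Hi "'j \<times> nat \<times> nat"

definition sched_rows :: "'j set \<Rightarrow> nat \<Rightarrow> nat \<Rightarrow> 'j sched_row set" where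
  "sched_rows J m S = AsgLo ` J \<union> AsgHi ` J \<union> {Cap i s |i s. i < m \<and> s < S}
      \<union> Lo ` sched_vars J m S \<union> Hi ` sched_vars J m S"

fun sched_A :: "'j sched_row \<Rightarrow> 'j \<times> nat \<times> nat \<Rightarrow> real" where
  "sched_A (AsgLo j) (j', i, s) = (if j' = j then 1 else 0)"
| "sched_A (AsgHi j) (j', i, s) = (if j' = j then -1 else 0)"
| "sched_A (Cap i s) (j', i', s') = (if i' = i \<and> s' = s then -1 else 0)"
| "sched_A (Lo w) v = (if v = w then 1 else 0)"
| "sched_A (Hi w) v = (if v = w then -1 else 0)"

fun sched_b :: "nat \<Rightarrow> 'j sched_row \<Rightarrow> real" where
  "sched_b c (AsgLo j) = 1"
| "sched_b c (AsgHi j) = -1"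
| "sched_b c (Cap i s) = - real c"
| "sched_b c (Lo w) = 0"
| "sched_b c (Hi w) = -1"

definition SA_sched :: "'j set \<Rightarrow> nat \<Rightarrow> nat \<Rightarrow> nat \<Rightarrow> nat \<Rightarrow> (('j \<times> nat \<times> nat) set \<Rightarrow> real) set" where
  "SA_sched J c S m r = sa_lift (sched_vars J m S) (sched_rows J m S) sched_A (sched_b c) r"

definition Q :: "'j set \<Rightarrow> ('j \<Rightarrow> 'j \<Rightarrow> bool) \<Rightarrow> nat \<Rightarrow> nat \<Rightarrow> nat \<Rightarrow> nat \<Rightarrow>
    ((('j \<times> nat \<times> nat) set \<Rightarrow> real) \<times> ('j \<Rightarrow> 'j \<Rightarrow> real) \<times> ('j \<Rightarrow> real)) set" where
  "Q J prec c S m r = {(x, y, C). x \<in> SA_sched J c S m r \<and>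
     (\<forall>j1\<in>J. \<forall>j2\<in>J. y j1 j2 = (\<Sum>s<S. \<Sum>i<m. x {(j1, i, s), (j2, i, s)})) \<and>
     (\<forall>j1\<in>J. \<forall>j2\<in>J. prec j1 j2 \<longrightarrow> C j2 \<ge> C j1 + (1 - y j1 j2)) \<and>
     (\<forall>j\<in>J. C j \<ge> 0)}"

end

theory Submission
  imports Defs
begin

text \<open>Multiplying the capacity row of slot (i, s) by the
  variable x_{j*,i,s} bounds \<Sum>_j x_{(j,i,s),(j*,i,s)} by c x_{j*,i,s}; summing over all slots
  and using the assignment row of j* gives \<Sum>_j y_{j,j*} \<le> c. The y_{j,j*} are nonnegative by
  the lifted bound rows, so by Markov's inequality at most c / (1 - \<beta>) of them reach 1 - \<beta>.\<close>

lemma sum_if_eq_mult: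
  fixes k :: "'b::semiring_0"
  assumes "finite A" "a \<in> A"
  shows "(\<Sum>x\<in>A. (if x = a then k else 0) * f x) = k * f a"
proof -
  have "(\<Sum>x\<in>A. (if x = a then k else 0) * f x) = (\<Sum>x\<in>A. if x = a then k * f a else 0)"
    by (rule sum.cong) auto
  then show ?thesis
    using assms by simp
qed

lemma card_threshold_mult_le_sum:
  fixes g :: "'a \<Rightarrow> real" and t :: real
  assumes "finite A" "\<And>a. a \<in> A \<Longrightarrow> 0 \<le> g a"
  shows "card {a \<in> A. t \<le> g a} * t \<le> (\<Sum>a\<in>A. g a)"
proof -
  have "card {a \<in> A. t \<le> g a} * t = (\<Sum>a\<in>{a \<in> A. t \<le> g a}. t)"
    by simp
  also have "\<dots> \<le> (\<Sum>a\<in>{a \<in> A. t \<le> g a}. g a)"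
    by (rule sum_mono) simp
  also have "\<dots> \<le> (\<Sum>a\<in>A. g a)"
    using assms by (intro sum_mono2) auto
  finally show ?thesis .
qed

lemma sa_lift_empty: "y \<in> sa_lift V L A b r \<Longrightarrow> y {} = 1"
  by (simp add: sa_lift_def)

lemma sa_lift_row_ineq:
  assumes "y \<in> sa_lift V L A b r" "l \<in> L" "I \<subseteq> V" "card I \<le> r"
  shows "b l * y I \<le> (\<Sum>v\<in>V. A l v * y (insert v I))"
proof -
  have "\<forall>l\<in>L. \<forall>I J'. I \<subseteq> V \<longrightarrow> J' \<subseteq> V \<longrightarrow> card I + card J' \<le> r \<longrightarrow>
      0 \<le> (\<Sum>H\<in>Pow J'. (-1) ^ card H *
        ((\<Sum>v\<in>V. A l v * y (I \<union> H \<union> {v})) - b l * y (I \<union> H)))"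
    using assms(1) unfolding sa_lift_def mem_Collect_eq by (rule conjunct2)
  from this[rule_format, OF assms(2,3) empty_subsetI] assms(4)
  show ?thesis
    by simp
qed

lemma finite_sched_vars: "finite J \<Longrightarrow> finite (sched_vars J m S)"
  by (simp add: sched_vars_def)

lemma sum_sched_vars:
  "finite J \<Longrightarrow> (\<Sum>v\<in>sched_vars J m S. f v) = (\<Sum>j\<in>J. \<Sum>p\<in>{..<m} \<times> {..<S}. f (j, p))"
  by (simp add: sched_vars_def sum.cartesian_product)

lemma sum_sched_A_Cap:
  fixes J :: "'j set"
  assumes "finite J" "i < m" "s < S"
  shows "(\<Sum>v\<in>sched_vars J m S. sched_A (Cap i s) v * f v) = - (\<Sum>j\<in>J. f (j, i, s))"
proof -
  have "sched_A (Cap i s) (j, p) = (if p = (i, s) then -1 else 0)" for j :: 'j and p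
    by (cases p) auto
  then show ?thesis
    using assms by (simp add: sum_sched_vars sum_if_eq_mult sum_negf)
qed

lemma sum_sched_A_AsgHi:
  assumes "finite J" "j \<in> J"
  shows "(\<Sum>v\<in>sched_vars J m S. sched_A (AsgHi j) v * f v) = - (\<Sum>p\<in>{..<m} \<times> {..<S}. f (j, p))"
proof -
  have "sched_A (AsgHi j) (j', p) = (if j' = j then -1 else 0)" for j' p
    by (cases p) auto
  then show ?thesis
    using assms by (simp add: sum_sched_vars sum_if_eq_mult flip: sum_distrib_left)
qed

lemma SA_sched_nonneg:
  assumes "x \<in> SA_sched J c S m r" "finite J" "v \<in> sched_vars J m S"
    "I \<subseteq> sched_vars J m S" "card I \<le> r"
  shows "0 \<le> x (insert v I)"
proof -
  have "Lo v \<in> sched_rows J m S"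
    using assms(3) by (simp add: sched_rows_def)
  from sa_lift_row_ineq[OF assms(1)[unfolded SA_sched_def] this assms(4,5)]
  show ?thesis
    using assms(2,3) by (simp add: sum_if_eq_mult finite_sched_vars)
qed

lemma SA_sched_capacity:
  assumes "x \<in> SA_sched J c S m r" "finite J" "i < m" "s < S"
    "I \<subseteq> sched_vars J m S" "card I \<le> r"
  shows "(\<Sum>j\<in>J. x (insert (j, i, s) I)) \<le> c * x I"
proof -
  have "Cap i s \<in> sched_rows J m S"
    using assms(3,4) by (auto simp: sched_rows_def)
  from sa_lift_row_ineq[OF assms(1)[unfolded SA_sched_def] this assms(5,6)]
  show ?thesis
    using assms(2-4) by (simp add: sum_sched_A_Cap)
qed

lemma SA_sched_assignment:
  assumes "x \<in> SA_sched J c S m r" "finite J" "j \<in> J"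
    "I \<subseteq> sched_vars J m S" "card I \<le> r"
  shows "(\<Sum>p\<in>{..<m} \<times> {..<S}. x (insert (j, p) I)) \<le> x I"
proof -
  have "AsgHi j \<in> sched_rows J m S"
    using assms(3) by (simp add: sched_rows_def)
  from sa_lift_row_ineq[OF assms(1)[unfolded SA_sched_def] this assms(4,5)]
  show ?thesis
    using assms(2,3) by (simp add: sum_sched_A_AsgHi)
qed

lemma SA_sched_pair_mass_le:
  assumes "x \<in> SA_sched J c S m r" "finite J" "jstar \<in> J" "1 \<le> r"
  shows "(\<Sum>j\<in>J. \<Sum>s<S. \<Sum>i<m. x {(j, i, s), (jstar, i, s)}) \<le> c"
proof -
  have slot: "{(jstar, i, s)} \<subseteq> sched_vars J m S" if "i < m" "s < S" for i s
    using that assms(3) by (simp add: sched_vars_def)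
  have "(\<Sum>j\<in>J. \<Sum>s<S. \<Sum>i<m. x {(j, i, s), (jstar, i, s)})
      = (\<Sum>s<S. \<Sum>i<m. \<Sum>j\<in>J. x (insert (j, i, s) {(jstar, i, s)}))"
    by (simp add: sum.swap[of _ J])
  also have "\<dots> \<le> (\<Sum>s<S. \<Sum>i<m. c * x {(jstar, i, s)})"
    using assms slot by (intro sum_mono SA_sched_capacity) auto
  also have "\<dots> = c * (\<Sum>i<m. \<Sum>s<S. x {(jstar, i, s)})"
    by (simp add: sum_distrib_left sum.swap[of _ "{..<S}"])
  also have "\<dots> = c * (\<Sum>p\<in>{..<m} \<times> {..<S}. x (insert (jstar, p) {}))"
    by (simp add: sum.cartesian_product)
  also have "\<dots> \<le> c * x {}"
    using assms by (intro mult_left_mono SA_sched_assignment) auto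
  also have "\<dots> = c"
    using assms(1) by (simp add: SA_sched_def sa_lift_empty)
  finally show ?thesis .
qed

theorem mainTheorem10:
  fixes J :: "'j set" and prec :: "'j \<Rightarrow> 'j \<Rightarrow> bool" and c S m r :: nat
    and x :: "('j \<times> nat \<times> nat) set \<Rightarrow> real" and y :: "'j \<Rightarrow> 'j \<Rightarrow> real" and C :: "'j \<Rightarrow> real"
    and jstar :: 'j and \<beta> :: real
  assumes "finite J"
    and "\<forall>j\<in>J. \<not> prec j j"
    and "\<forall>j1\<in>J. \<forall>j2\<in>J. \<forall>j3\<in>J. prec j1 j2 \<longrightarrow> prec j2 j3 \<longrightarrow> prec j1 j3"
    and "(x, y, C) \<in> Q J prec c S m r"
    and "r \<ge> 5"
    and "jstar \<in> J"
    and "0 < \<beta>" and "\<beta> < 1"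
  shows "real (card {j \<in> J. 1 - y j jstar \<le> \<beta>}) \<le> real c / (1 - \<beta>)"
proof -
  have x: "x \<in> SA_sched J c S m r"
    and y: "\<forall>j1\<in>J. \<forall>j2\<in>J. y j1 j2 = (\<Sum>s<S. \<Sum>i<m. x {(j1, i, s), (j2, i, s)})"
    using assms(4) by (auto simp: Q_def)
  have r: "1 \<le> r"
    using assms(5) by simp
  have y_nonneg: "0 \<le> y j jstar" if "j \<in> J" for j
  proof -
    have "0 \<le> x (insert (j, i, s) {(jstar, i, s)})" if "i < m" "s < S" for i s
      using \<open>j \<in> J\<close> that assms(1,6) r
      by (intro SA_sched_nonneg[OF x]) (auto simp: sched_vars_def)
    then show ?thesis
      using \<open>j \<in> J\<close> assms(6) y by (simp, intro sum_nonneg) auto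
  qed
  have "card {j \<in> J. 1 - \<beta> \<le> y j jstar} * (1 - \<beta>) \<le> (\<Sum>j\<in>J. y j jstar)"
    using assms(1) y_nonneg by (rule card_threshold_mult_le_sum)
  also have "\<dots> = (\<Sum>j\<in>J. \<Sum>s<S. \<Sum>i<m. x {(j, i, s), (jstar, i, s)})"
    using assms(6) y by (intro sum.cong) auto
  also have "\<dots> \<le> c"
    using SA_sched_pair_mass_le[OF x assms(1,6) r] .
  finally have "card {j \<in> J. 1 - \<beta> \<le> y j jstar} * (1 - \<beta>) \<le> c" .
  moreover have "{j \<in> J. 1 - y j jstar \<le> \<beta>} = {j \<in> J. 1 - \<beta> \<le> y j jstar}"
    by auto
  moreover have "0 < 1 - \<beta>"
    using assms(8) by simp
  ultimately show ?thesis
    by (metis pos_le_divide_eq)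
qed

end
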